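(* In the baseline diffusion model described in the context, once an individual consumes the new product he consumes it in every later period: for every $t\ge 1$, $D_n^{t-1}\subseteq D_n^{t}$. Equivalently, if $i\in D_n^{t}$ then $i\in D_n^{t'}$ for all $t'\ge t$.
   Context: Baseline diffusion model. There are $N\ge 2$ individuals $i\in\{1,\dots,N\}$ and two products, an incumbent $p_c$ and a new product $p_n$. The individuals are partitioned into $G\ge 2$ nonempty groups $N_1,\dots,N_G$ (the symbol $N_k$ also denotes the group's cardinality). Every member of group $N_k$ has the same aspiration level $H_{N_k}$, and $H_{N_1}>H_{N_2}>\cdots>H_{N_G}$; write $H_i$ for the aspiration level of individual $i$. Consuming $p_c$ gives every individual the payoff $v_L$, where $H_{N_2}<v_L<H_{N_1}$. Consuming $p_n$ gives individual $i$ the payoff $v_{Hi}$, where $v_{Hi}\ge H_{N_1}$ for all $i$. Product similarities are $s_{p_c,p_c}=s_{p_n,p_n}=1$, $s_{p_n,p_c}=s_p\in(0,1)$ and $s_{p_c,p_n}=0$. Individual similarities are $s_{i,i}=1$ and $s_{i,j}=s\in(0,1]$ for $i\neq j$. Dynamics. Time is $t=0,1,2,\dots$. In period $0$ everyone consumes $p_c$, i.e. $D_c^0=\{1,\dots,N\}$ and $D_n^0=\emptyset$. For $t\ge1$, individual $i$'s evaluations are $U_i^t(p_c)=\sum_{t'=0}^{t-1}\sum_{j\in D_c^{t'}} s_{i,j}(v_L-H_i)$ and $U_i^t(p_n)=s_p\,U_i^t(p_c)+\sum_{t'=0}^{t-1}\sum_{j\in D_n^{t'}} s_{i,j}(v_{Hj}-H_i)$.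 These are the sums $\sum s_{i,j}s_{p,p'}(v-H_i)$ over all past consumption cases $(j,p',v)$, one case per individual per past period. Individual $i$ consumes $p_n$ in period $t$ (i.e. $i\in D_n^t$) if $U_i^t(p_n)>U_i^t(p_c)$; otherwise he consumes $p_c$ (i.e. $i\in D_c^t$). Thus $D_c^t$ and $D_n^t$ partition $\{1,\dots,N\}$, and $|D|$ denotes the cardinality of a set $D$. *)

theory Defs
  imports Main "HOL.Real"
begin

text \<open>Individuals are 1..N. Group membership is a function
  grp from individuals to group indices 1..G; the aspiration level of group k is Hg k,
  and the aspiration level of individual i is Hi i = Hg (grp i).
  A history is a list of the sets of consumers of the new product in periods 0,1,...;
  the consumers of the incumbent in a period are the complement within 1..N.\<close>

definition sim :: "real \<Rightarrow> nat \<Rightarrow> nat \<Rightarrow> real" where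
  "sim s i j = (if i = j then 1 else s)"

definition Uinc :: "nat \<Rightarrow> (nat \<Rightarrow> real) \<Rightarrow> real \<Rightarrow> real \<Rightarrow> nat set list \<Rightarrow> nat \<Rightarrow> real" where
  "Uinc N Hi vL s hs i =
     (\<Sum>t'<length hs. \<Sum>j\<in>{1..N} - hs ! t'. sim s i j * (vL - Hi i))"

definition Unew :: "nat \<Rightarrow> (nat \<Rightarrow> real) \<Rightarrow> real \<Rightarrow> (nat \<Rightarrow> real) \<Rightarrow> real \<Rightarrow> real
                  \<Rightarrow> nat set list \<Rightarrow> nat \<Rightarrow> real" where
  "Unew N Hi vL vH sp s hs i =
     sp * Uinc N Hi vL s hs i + (\<Sum>t'<length hs. \<Sum>j\<in>hs ! t'. sim s i j * (vH j - Hi i))"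

definition next_Dn :: "nat \<Rightarrow> (nat \<Rightarrow> real) \<Rightarrow> real \<Rightarrow> (nat \<Rightarrow> real) \<Rightarrow> real \<Rightarrow> real
                  \<Rightarrow> nat set list \<Rightarrow> nat set" where
  "next_Dn N Hi vL vH sp s hs =
     {i \<in> {1..N}. Unew N Hi vL vH sp s hs i > Uinc N Hi vL s hs i}"

text \<open>hist t = [D_n^0, ..., D_n^t].\<close>
primrec hist :: "nat \<Rightarrow> (nat \<Rightarrow> real) \<Rightarrow> real \<Rightarrow> (nat \<Rightarrow> real) \<Rightarrow> real \<Rightarrow> real
                  \<Rightarrow> nat \<Rightarrow> nat set list" where
  "hist N Hi vL vH sp s 0 = [{}]"
| "hist N Hi vL vH sp s (Suc t) =
     hist N Hi vL vH sp s t @ [next_Dn N Hi vL vH sp s (hist N Hi vL vH sp s t)]"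

definition Dn :: "nat \<Rightarrow> (nat \<Rightarrow> real) \<Rightarrow> real \<Rightarrow> (nat \<Rightarrow> real) \<Rightarrow> real \<Rightarrow> real
                  \<Rightarrow> nat \<Rightarrow> nat set" where
  "Dn N Hi vL vH sp s t = hist N Hi vL vH sp s t ! t"

definition Dc :: "nat \<Rightarrow> (nat \<Rightarrow> real) \<Rightarrow> real \<Rightarrow> (nat \<Rightarrow> real) \<Rightarrow> real \<Rightarrow> real
                  \<Rightarrow> nat \<Rightarrow> nat set" where
  "Dc N Hi vL vH sp s t = {1..N} - Dn N Hi vL vH sp s t"

definition baseline_model ::
  "nat \<Rightarrow> nat \<Rightarrow> (nat \<Rightarrow> nat) \<Rightarrow> (nat \<Rightarrow> real) \<Rightarrow> real \<Rightarrow> (nat \<Rightarrow> real) \<Rightarrow> real \<Rightarrow> real \<Rightarrow> bool"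
  where
  "baseline_model N G grp Hg vL vH sp s \<longleftrightarrow>
     N \<ge> 2 \<and> G \<ge> 2 \<and>
     grp ` {1..N} = {1..G} \<and>
     (\<forall>a b. 1 \<le> a \<and> a < b \<and> b \<le> G \<longrightarrow> Hg b < Hg a) \<and>
     Hg 2 < vL \<and> vL < Hg 1 \<and>
     (\<forall>i\<in>{1..N}. vH i \<ge> Hg 1) \<and>
     0 < sp \<and> sp < 1 \<and> 0 < s \<and> s \<le> 1"

end

theory Submission
  imports Defs
begin

text \<open>The advantage U(p_n) - U(p_c) of individual i is a sum of per-period gains, one for each
  past period, and the gain of a period depends only on the set D of adopters in that period.
  If H_i \<ge> v_L every gain is nonnegative, so a positive advantage stays positive. If H_i < v_L
  the gain is monotone in D; since, inductively, the adopter sets have grown so far, the gain of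
  the latest period is the largest, and a positive sum forces it to be positive as well.\<close>

lemma length_hist: "length (hist N Hi vL vH sp s t) = Suc t"
  by (induction t) auto

lemma nth_hist: "k \<le> t \<Longrightarrow> hist N Hi vL vH sp s t ! k = Dn N Hi vL vH sp s k"
proof (induction t)
  case 0
  then show ?case by (simp add: Dn_def)
next
  case (Suc t)
  then show ?case
    by (cases "k = Suc t") (simp_all add: Dn_def nth_append length_hist)
qed

lemma Dn_0: "Dn N Hi vL vH sp s 0 = {}"
  by (simp add: Dn_def)

lemma Dn_Suc: "Dn N Hi vL vH sp s (Suc t) = next_Dn N Hi vL vH sp s (hist N Hi vL vH sp s t)"
  by (simp add: Dn_def nth_append length_hist)

lemma Dn_subset: "Dn N Hi vL vH sp s t \<subseteq> {1..N}"
  by (cases t) (auto simp: Dn_0 Dn_Suc next_Dn_def)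

lemma sim_nonneg: "0 \<le> s \<Longrightarrow> 0 \<le> sim s i j"
  by (simp add: sim_def)

definition period_gain :: "nat \<Rightarrow> (nat \<Rightarrow> real) \<Rightarrow> real \<Rightarrow> (nat \<Rightarrow> real) \<Rightarrow> real \<Rightarrow> real
                  \<Rightarrow> nat set \<Rightarrow> nat \<Rightarrow> real" where
  "period_gain N Hi vL vH sp s D i =
     (\<Sum>j\<in>D. sim s i j * (vH j - Hi i)) + (sp - 1) * (\<Sum>j\<in>{1..N} - D. sim s i j * (vL - Hi i))"

lemma Unew_minus_Uinc:
  "Unew N Hi vL vH sp s hs i - Uinc N Hi vL s hs i
     = (\<Sum>k<length hs. period_gain N Hi vL vH sp s (hs ! k) i)"
proof -
  have "Unew N Hi vL vH sp s hs i - Uinc N Hi vL s hs i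
      = (\<Sum>k<length hs. \<Sum>j\<in>hs ! k. sim s i j * (vH j - Hi i)) + (sp - 1) * Uinc N Hi vL s hs i"
    by (simp add: Unew_def algebra_simps)
  then show ?thesis
    by (simp add: Uinc_def period_gain_def sum.distrib sum_distrib_left)
qed

lemma period_gain_nonneg:
  assumes "vL \<le> Hi i" "\<forall>j\<in>D. Hi i \<le> vH j" "sp \<le> 1" "0 \<le> s"
  shows "0 \<le> period_gain N Hi vL vH sp s D i"
proof -
  have "0 \<le> (\<Sum>j\<in>D. sim s i j * (vH j - Hi i))"
    using assms by (intro sum_nonneg mult_nonneg_nonneg sim_nonneg) auto
  moreover have "0 \<le> (sp - 1) * (\<Sum>j\<in>{1..N} - D. sim s i j * (vL - Hi i))"
    using assms
    by (intro mult_nonpos_nonpos sum_nonpos mult_nonneg_nonpos sim_nonneg) auto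
  ultimately show ?thesis
    by (simp add: period_gain_def)
qed

lemma period_gain_mono:
  assumes "Hi i \<le> vL" "\<forall>j\<in>E. Hi i \<le> vH j" "sp \<le> 1" "0 \<le> s"
    and "D \<subseteq> E" "E \<subseteq> {1..N}"
  shows "period_gain N Hi vL vH sp s D i \<le> period_gain N Hi vL vH sp s E i"
proof -
  have fin: "finite E"
    using assms(6) finite_subset by blast
  have "(\<Sum>j\<in>D. sim s i j * (vH j - Hi i)) \<le> (\<Sum>j\<in>E. sim s i j * (vH j - Hi i))"
    using assms fin by (intro sum_mono2 mult_nonneg_nonneg sim_nonneg) auto
  moreover have "(\<Sum>j\<in>{1..N} - E. sim s i j * (vL - Hi i)) \<le> (\<Sum>j\<in>{1..N} - D. sim s i j * (vL - Hi i))"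
    using assms by (intro sum_mono2 mult_nonneg_nonneg sim_nonneg) auto
  then have "(sp - 1) * (\<Sum>j\<in>{1..N} - D. sim s i j * (vL - Hi i))
      \<le> (sp - 1) * (\<Sum>j\<in>{1..N} - E. sim s i j * (vL - Hi i))"
    using assms(3) by (intro mult_left_mono_neg) auto
  ultimately show ?thesis
    by (simp add: period_gain_def)
qed

lemma mem_Dn_Suc_iff:
  "i \<in> Dn N Hi vL vH sp s (Suc t) \<longleftrightarrow>
     i \<in> {1..N} \<and> 0 < (\<Sum>k<Suc t. period_gain N Hi vL vH sp s (Dn N Hi vL vH sp s k) i)"
proof -
  have "i \<in> Dn N Hi vL vH sp s (Suc t) \<longleftrightarrow> i \<in> {1..N} \<and>
      0 < Unew N Hi vL vH sp s (hist N Hi vL vH sp s t) i - Uinc N Hi vL s (hist N Hi vL vH sp s t) i"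
    by (simp add: Dn_Suc next_Dn_def)
  then show ?thesis
    by (simp add: Unew_minus_Uinc length_hist nth_hist)
qed

lemma sum_lessThan_Suc_pos:
  fixes a :: "nat \<Rightarrow> real"
  assumes pos: "0 < (\<Sum>k<n. a k)" and next_term: "0 \<le> a n \<or> (\<forall>k<n. a k \<le> a n)"
  shows "0 < (\<Sum>k<Suc n. a k)"
  using next_term
proof
  assume "\<forall>k<n. a k \<le> a n"
  then have "(\<Sum>k<n. a k) \<le> real n * a n"
    using sum_mono[of "{..<n}" a "\<lambda>_. a n"] by simp
  then have "0 < real n * a n"
    using pos by linarith
  then have "0 < a n"
    by (simp add: zero_less_mult_iff)
  then show ?thesis
    using pos by simp
qed (use pos in simp)

lemma Dn_subset_Dn_Suc:
  assumes aspiration_le: "\<forall>i\<in>{1..N}. \<forall>j\<in>{1..N}. Hi i \<le> vH j" and "sp \<le> 1" "0 \<le> s"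
  shows "Dn N Hi vL vH sp s t \<subseteq> Dn N Hi vL vH sp s (Suc t)"
proof (induction t rule: less_induct)
  case (less t)
  let ?D = "Dn N Hi vL vH sp s"
  show ?case
  proof (cases t)
    case 0
    then show ?thesis by (simp add: Dn_0)
  next
    case (Suc m)
    have grown: "?D k \<subseteq> ?D t" if "k \<le> t" for k
      using that by (induction rule: dec_induct) (use less.IH in auto)
    show ?thesis
    proof
      fix i
      assume "i \<in> ?D t"
      then have i: "i \<in> {1..N}"
        and pos: "0 < (\<Sum>k<t. period_gain N Hi vL vH sp s (?D k) i)"
        using Suc mem_Dn_Suc_iff by auto
      have vH_i: "\<forall>j\<in>?D k. Hi i \<le> vH j" for k
        using aspiration_le i Dn_subset by blast
      have "0 \<le> period_gain N Hi vL vH sp s (?D t) i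
          \<or> (\<forall>k<t. period_gain N Hi vL vH sp s (?D k) i \<le> period_gain N Hi vL vH sp s (?D t) i)"
      proof (cases "vL \<le> Hi i")
        case True
        then show ?thesis
          using period_gain_nonneg vH_i assms by blast
      next
        case False
        then show ?thesis
          using period_gain_mono[of Hi i vL] vH_i assms grown Dn_subset by simp
      qed
      then have "0 < (\<Sum>k<Suc t. period_gain N Hi vL vH sp s (?D k) i)"
        using sum_lessThan_Suc_pos pos by blast
      then show "i \<in> ?D (Suc t)"
        using i mem_Dn_Suc_iff by blast
    qed
  qed
qed

lemma baseline_aspiration_le_vH:
  assumes "baseline_model N G grp Hg vL vH sp s" "i \<in> {1..N}" "j \<in> {1..N}"
  shows "Hg (grp i) \<le> vH j"
proof -
  have "grp i \<in> {1..G}"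
    using assms unfolding baseline_model_def by blast
  then have "Hg (grp i) \<le> Hg 1"
    using assms(1) unfolding baseline_model_def
    by (cases "grp i = 1") (auto simp: less_imp_le)
  also have "Hg 1 \<le> vH j"
    using assms unfolding baseline_model_def by blast
  finally show ?thesis .
qed

theorem lemma1:
  fixes N G :: nat and grp :: "nat \<Rightarrow> nat" and Hg vH :: "nat \<Rightarrow> real"
    and vL sp s :: real
  assumes "baseline_model N G grp Hg vL vH sp s"
  defines "Hi \<equiv> (\<lambda>i. Hg (grp i))"
  shows "(\<forall>t\<ge>1. Dn N Hi vL vH sp s (t - 1) \<subseteq> Dn N Hi vL vH sp s t)
       \<and> (\<forall>i t t'. i \<in> Dn N Hi vL vH sp s t \<and> t \<le> t' \<longrightarrow> i \<in> Dn N Hi vL vH sp s t')"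
proof -
  have "\<forall>i\<in>{1..N}. \<forall>j\<in>{1..N}. Hi i \<le> vH j"
    using baseline_aspiration_le_vH[OF assms(1)] by (simp add: Hi_def)
  moreover have "sp \<le> 1" "0 \<le> s"
    using assms(1) by (auto simp: baseline_model_def)
  ultimately have step: "Dn N Hi vL vH sp s t \<subseteq> Dn N Hi vL vH sp s (Suc t)" for t
    by (rule Dn_subset_Dn_Suc)
  then have "Dn N Hi vL vH sp s t \<subseteq> Dn N Hi vL vH sp s t'" if "t \<le> t'" for t t'
    using lift_Suc_mono_le that by metis
  moreover have "Dn N Hi vL vH sp s (t - 1) \<subseteq> Dn N Hi vL vH sp s t" if "t \<ge> 1" for t
    using step[of "t - 1"] that by simp
  ultimately show ?thesis
    by blast
qed

end
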